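(* For $\theta\in(0,2\pi]$ let $$a(\theta)=2\frac{1-\cos\theta}{\theta^2}-\frac{\sin\theta}{2\theta},\qquad b(\theta)=\frac{1-\cos\theta}{\theta^4}-\frac{\sin\theta}{2\theta^3},$$ and $a(0)=1/2$, $b(0)=1/24$. Then (i) $a$ and $b$ are strictly decreasing and strictly positive on $(0,2\pi)$, with $\frac12=a(0)>a(\theta)>a(2\pi)=0$ and $\frac1{24}=b(0)>b(\theta)>b(2\pi)=0$ for $\theta\in(0,2\pi)$; (ii) $a(\theta)/b(\theta)$ is strictly increasing on $[0,2\pi)$, and $\sup_{0<\theta<2\pi}a(\theta)/b(\theta)=\lim_{\theta\to2\pi-}a(\theta)/b(\theta)=4\pi^2$. *)

theory Defs
  imports "HOL-Analysis.Analysis"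
begin

definition afun :: "real \<Rightarrow> real" where
  "afun \<theta> = (if \<theta> = 0 then 1/2
     else 2 * (1 - cos \<theta>) / \<theta>^2 - sin \<theta> / (2 * \<theta>))"

definition bfun :: "real \<Rightarrow> real" where
  "bfun \<theta> = (if \<theta> = 0 then 1/24
     else (1 - cos \<theta>) / \<theta>^4 - sin \<theta> / (2 * \<theta>^3))"

end

theory Submission
  imports Defs "HOL-Real_Asymp.Real_Asymp"
begin

(* Both derivatives share one numerator: x^3 a'(x) = x^5 b'(x) = N(x), where
   N(x) = 5/2 x sin x - 4 (1 - cos x) - x^2 cos x / 2. In the half angle,
   N(2t) = 2 (sin t (t^2 sin t - 3 sin t + 3 t cos t) - (sin t - t cos t)^2),
   and for 0 < t < pi the middle factor is negative (by comparing derivatives twice),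
   so N < 0 on (0, 2 pi). Hence a and b decrease strictly and lie strictly between
   their one-sided limits at 0 and 2 pi. Finally a = x^2 b + (1 - cos x) / x^2 and
   a' = x^2 b' give (a/b)' = - b' (1 - cos x) / (x^2 b^2) > 0. The endpoint limits
   follow from asymptotic expansions. *)

lemma strict_mono_on_if_DERIV_pos:
  fixes f f' :: "real \<Rightarrow> real"
  assumes "\<And>x. a < x \<Longrightarrow> x < b \<Longrightarrow> (f has_real_derivative f' x) (at x)"
    and "\<And>x. a < x \<Longrightarrow> x < b \<Longrightarrow> f' x > 0"
  shows "strict_mono_on {a<..<b} f"
proof (rule strict_mono_onI)
  fix r s assume r: "r \<in> {a<..<b}" and s: "s \<in> {a<..<b}" and "r < s"
  show "f r < f s"
  proof (rule DERIV_pos_imp_increasing[OF \<open>r < s\<close>])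
    fix x assume "r \<le> x" "x \<le> s"
    with r s have "a < x" "x < b" by auto
    with assms show "\<exists>y. DERIV f x :> y \<and> y > 0" by blast
  qed
qed

lemma strict_antimono_on_if_DERIV_neg:
  fixes f f' :: "real \<Rightarrow> real"
  assumes "\<And>x. a < x \<Longrightarrow> x < b \<Longrightarrow> (f has_real_derivative f' x) (at x)"
    and "\<And>x. a < x \<Longrightarrow> x < b \<Longrightarrow> f' x < 0"
  shows "strict_antimono_on {a<..<b} f"
proof (rule monotone_onI)
  fix r s assume r: "r \<in> {a<..<b}" and s: "s \<in> {a<..<b}" and "r < s"
  show "f s < f r"
  proof (rule DERIV_neg_imp_decreasing[OF \<open>r < s\<close>])
    fix x assume "r \<le> x" "x \<le> s"
    with r s have "a < x" "x < b" by auto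
    with assms show "\<exists>y. DERIV f x :> y \<and> y < 0" by blast
  qed
qed

lemma strict_mono_on_limit_at_right_less:
  fixes f :: "real \<Rightarrow> real"
  assumes mono: "strict_mono_on {a<..<b} f" and L: "(f \<longlongrightarrow> L) (at_right a)"
    and x: "x \<in> {a<..<b}"
  shows "L < f x"
proof -
  define y where "y = (a + x) / 2"
  have y: "a < y" "y < x" using x by (auto simp: y_def)
  have "eventually (\<lambda>w. f w \<le> f y) (at_right a)"
  proof (rule eventually_at_rightI)
    fix w assume "w \<in> {a<..<y}"
    then show "f w \<le> f y" using x y by (intro strict_mono_on_leD[OF mono]) auto
  qed (fact y)
  then have "L \<le> f y" by (rule tendsto_upperbound[OF L]) simp
  also have "f y < f x" using x y by (intro strict_mono_onD[OF mono]) auto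
  finally show "L < f x" .
qed

lemma strict_mono_on_less_limit_at_left:
  fixes f :: "real \<Rightarrow> real"
  assumes mono: "strict_mono_on {a<..<b} f" and M: "(f \<longlongrightarrow> M) (at_left b)"
    and x: "x \<in> {a<..<b}"
  shows "f x < M"
proof -
  define z where "z = (x + b) / 2"
  have z: "x < z" "z < b" using x by (auto simp: z_def)
  have "eventually (\<lambda>w. f z \<le> f w) (at_left b)"
  proof (rule eventually_at_leftI)
    fix w assume "w \<in> {z<..<b}"
    then show "f z \<le> f w" using x z by (intro strict_mono_on_leD[OF mono]) auto
  qed (fact z)
  then have "f z \<le> M" by (rule tendsto_lowerbound[OF M]) simp
  have "f x < f z" using x z by (intro strict_mono_onD[OF mono]) auto
  also note \<open>f z \<le> M\<close>
  finally show "f x < M" .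
qed

lemma strict_antimono_on_between_limits:
  fixes f :: "real \<Rightarrow> real"
  assumes "strict_antimono_on {a<..<b} f"
    and "(f \<longlongrightarrow> L) (at_right a)" and "(f \<longlongrightarrow> M) (at_left b)"
    and "x \<in> {a<..<b}"
  shows "M < f x" "f x < L"
proof -
  have "strict_mono_on {a<..<b} (\<lambda>x. - f x)"
    using assms(1) by (auto simp: monotone_on_def)
  with assms(2-4) show "M < f x" "f x < L"
    using strict_mono_on_limit_at_right_less[of a b "\<lambda>x. - f x"]
      strict_mono_on_less_limit_at_left[of a b "\<lambda>x. - f x"] tendsto_minus by force+
qed

lemma SUP_strict_mono_on_eq_limit:
  fixes f :: "real \<Rightarrow> real"
  assumes mono: "strict_mono_on {a<..<b} f" and "a < b"
    and M: "(f \<longlongrightarrow> M) (at_left b)"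
  shows "(SUP x\<in>{a<..<b}. f x) = M"
proof (rule antisym)
  have below: "f x \<le> M" if "x \<in> {a<..<b}" for x
    using strict_mono_on_less_limit_at_left[OF mono M that] by simp
  show "(SUP x\<in>{a<..<b}. f x) \<le> M"
    using \<open>a < b\<close> below by (intro cSUP_least) auto
  have "bdd_above (f ` {a<..<b})"
    using below by (intro bdd_aboveI2) auto
  then show "M \<le> (SUP x\<in>{a<..<b}. f x)"
    by (intro tendsto_upperbound[OF M eventually_at_leftI[OF _ \<open>a < b\<close>]] cSUP_upper) auto
qed

lemma mult_cos_less_sin:
  fixes t :: real
  assumes "0 < t" "t \<le> pi"
  shows "t * cos t < sin t"
proof -
  have "sin 0 - 0 * cos 0 < sin t - t * cos t"
  proof (rule DERIV_pos_imp_increasing_open[OF \<open>0 < t\<close>])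
    fix x assume x: "0 < x" "x < t"
    have "((\<lambda>x. sin x - x * cos x) has_real_derivative x * sin x) (at x)"
      by (auto intro!: derivative_eq_intros simp: algebra_simps)
    moreover have "x * sin x > 0" using x assms by (simp add: sin_gt_zero)
    ultimately show "\<exists>y. ((\<lambda>x. sin x - x * cos x) has_real_derivative y) (at x) \<and> 0 < y"
      by blast
  qed (intro continuous_intros)
  then show ?thesis by simp
qed

lemma mult_sin_add_mult_cos_less_sin:
  fixes t :: real
  assumes "0 < t" "t \<le> pi"
  shows "t^2 * sin t + 3 * t * cos t < 3 * sin t"
proof -
  let ?g = "\<lambda>x. 3 * sin x - x^2 * sin x - 3 * x * cos x"
  have "?g 0 < ?g t"
  proof (rule DERIV_pos_imp_increasing_open[OF \<open>0 < t\<close>])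
    fix x assume x: "0 < x" "x < t"
    have "(?g has_real_derivative x * (sin x - x * cos x)) (at x)"
      by (auto intro!: derivative_eq_intros simp: algebra_simps power2_eq_square)
    moreover have "x * (sin x - x * cos x) > 0"
      using x assms mult_cos_less_sin[of x] by simp
    ultimately show "\<exists>y. (?g has_real_derivative y) (at x) \<and> 0 < y" by blast
  qed (intro continuous_intros)
  then show ?thesis by simp
qed

definition ab_deriv_numer :: "real \<Rightarrow> real" where
  "ab_deriv_numer x = 5/2 * x * sin x - 4 * (1 - cos x) - x^2 * cos x / 2"

lemma ab_deriv_numer_double:
  "ab_deriv_numer (2*t) =
     2 * (sin t * (t^2 * sin t - 3 * sin t + 3 * t * cos t) - (sin t - t * cos t)^2)"
  unfolding ab_deriv_numer_def sin_double cos_double_sin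
  by (simp add: power2_diff cos_squared_eq algebra_simps power_mult_distrib)
     (simp add: field_simps power2_eq_square)

lemma ab_deriv_numer_neg:
  assumes "0 < x" "x < 2*pi"
  shows "ab_deriv_numer x < 0"
proof -
  define t where "t = x/2"
  have t: "0 < t" "t < pi" and x: "x = 2*t" using assms by (auto simp: t_def)
  have "sin t > 0" using t by (simp add: sin_gt_zero)
  moreover have "t^2 * sin t - 3 * sin t + 3 * t * cos t < 0"
    using mult_sin_add_mult_cos_less_sin[of t] t by simp
  ultimately have "sin t * (t^2 * sin t - 3 * sin t + 3 * t * cos t) < 0"
    by (simp add: mult_pos_neg)
  then show ?thesis unfolding x ab_deriv_numer_double by (smt (verit) zero_le_power2)
qed

lemma DERIV_afun:
  assumes "x \<noteq> 0"
  shows "(afun has_real_derivative ab_deriv_numer x / x^3) (at x)"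
proof -
  have "((\<lambda>x. 2 * (1 - cos x) / x^2 - sin x / (2 * x)) has_real_derivative
      ab_deriv_numer x / x^3) (at x)"
    using assms
    by (auto intro!: derivative_eq_intros simp: ab_deriv_numer_def field_simps)
       (simp add: algebra_simps eval_nat_numeral)
  then show ?thesis
    by (rule has_field_derivative_transform_within_open[of _ _ _ "-{0}"])
       (use assms in \<open>auto simp: afun_def\<close>)
qed

lemma DERIV_bfun:
  assumes "x \<noteq> 0"
  shows "(bfun has_real_derivative ab_deriv_numer x / x^5) (at x)"
proof -
  have "((\<lambda>x. (1 - cos x) / x^4 - sin x / (2 * x^3)) has_real_derivative
      ab_deriv_numer x / x^5) (at x)"
    using assms
    by (auto intro!: derivative_eq_intros simp: ab_deriv_numer_def field_simps)
       (simp add: algebra_simps eval_nat_numeral)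
  then show ?thesis
    by (rule has_field_derivative_transform_within_open[of _ _ _ "-{0}"])
       (use assms in \<open>auto simp: bfun_def\<close>)
qed

lemma afun_eq_bfun:
  assumes "x \<noteq> 0"
  shows "afun x = x^2 * bfun x + (1 - cos x) / x^2"
  using assms by (simp add: afun_def bfun_def field_simps eval_nat_numeral)

lemma cos_less_one:
  fixes x :: real
  assumes "0 < x" "x < 2*pi"
  shows "cos x < 1"
proof -
  have "sin (x/2) > 0" using assms by (intro sin_gt_zero) auto
  then show ?thesis using cos_double_sin[of "x/2"] by simp
qed

lemma eventually_afun_bfun_eq:
  assumes "eventually (\<lambda>x. x \<noteq> 0) F"
  shows "eventually (\<lambda>x. afun x = 2 * (1 - cos x) / x^2 - sin x / (2 * x)
                       \<and> bfun x = (1 - cos x) / x^4 - sin x / (2 * x^3)) F"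
  using assms by eventually_elim (simp add: afun_def bfun_def)

lemma afun_bfun_tendsto_at_right_0:
  "(afun \<longlongrightarrow> 1/2) (at_right 0)" "(bfun \<longlongrightarrow> 1/24) (at_right 0)"
  "((\<lambda>x. afun x / bfun x) \<longlongrightarrow> 12) (at_right 0)"
proof -
  have "eventually (\<lambda>x. x \<noteq> 0) (at_right (0::real))"
    using eventually_at_right_less by (rule eventually_mono) simp
  note eq = eventually_afun_bfun_eq[OF this]
  show "(afun \<longlongrightarrow> 1/2) (at_right 0)"
    by (subst tendsto_cong[OF eventually_mono[OF eq]]) (simp, real_asymp)
  show "(bfun \<longlongrightarrow> 1/24) (at_right 0)"
    by (subst tendsto_cong[OF eventually_mono[OF eq]]) (simp, real_asymp)
  show "((\<lambda>x. afun x / bfun x) \<longlongrightarrow> 12) (at_right 0)"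
    by (subst tendsto_cong[OF eventually_mono[OF eq]]) (simp, real_asymp)
qed

lemma afun_bfun_tendsto_at_left_2pi:
  "(afun \<longlongrightarrow> 0) (at_left (2*pi))" "(bfun \<longlongrightarrow> 0) (at_left (2*pi))"
  "((\<lambda>x. afun x / bfun x) \<longlongrightarrow> 4 * pi^2) (at_left (2*pi))"
proof -
  have "eventually (\<lambda>x. x \<noteq> 0) (at_left (2*pi))"
    by (rule eventually_at_leftI[of 0]) auto
  note eq = eventually_afun_bfun_eq[OF this]
  show "(afun \<longlongrightarrow> 0) (at_left (2*pi))"
    by (subst tendsto_cong[OF eventually_mono[OF eq]]) (simp, real_asymp)
  show "(bfun \<longlongrightarrow> 0) (at_left (2*pi))"
    by (subst tendsto_cong[OF eventually_mono[OF eq]]) (simp, real_asymp)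
  have "((\<lambda>x. afun x / bfun x) \<longlongrightarrow> 4 * inverse pi / inverse (pi^3)) (at_left (2*pi))"
    by (subst tendsto_cong[OF eventually_mono[OF eq]]) (simp, real_asymp)
  then show "((\<lambda>x. afun x / bfun x) \<longlongrightarrow> 4 * pi^2) (at_left (2*pi))"
    by (rule tendsto_cong_limit) (simp add: field_simps eval_nat_numeral)
qed

lemma strict_antimono_on_afun: "strict_antimono_on {0<..<2*pi} afun"
  by (rule strict_antimono_on_if_DERIV_neg[OF DERIV_afun])
     (auto simp: ab_deriv_numer_neg divide_neg_pos)

lemma strict_antimono_on_bfun: "strict_antimono_on {0<..<2*pi} bfun"
  by (rule strict_antimono_on_if_DERIV_neg[OF DERIV_bfun])
     (auto simp: ab_deriv_numer_neg divide_neg_pos)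

lemma afun_bounds: "\<theta> \<in> {0<..<2*pi} \<Longrightarrow> 0 < afun \<theta> \<and> afun \<theta> < 1/2"
  using strict_antimono_on_between_limits[OF strict_antimono_on_afun
      afun_bfun_tendsto_at_right_0(1) afun_bfun_tendsto_at_left_2pi(1)] by blast

lemma bfun_bounds: "\<theta> \<in> {0<..<2*pi} \<Longrightarrow> 0 < bfun \<theta> \<and> bfun \<theta> < 1/24"
  using strict_antimono_on_between_limits[OF strict_antimono_on_bfun
      afun_bfun_tendsto_at_right_0(2) afun_bfun_tendsto_at_left_2pi(2)] by blast

lemma DERIV_afun_div_bfun:
  assumes "0 < x" "x < 2*pi"
  shows "((\<lambda>x. afun x / bfun x) has_real_derivative
           - ab_deriv_numer x / x^5 * ((1 - cos x) / x^2) / (bfun x)^2) (at x)"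
proof -
  have "bfun x \<noteq> 0" using bfun_bounds assms by force
  then have "((\<lambda>x. afun x / bfun x) has_real_derivative
      (ab_deriv_numer x / x^3 * bfun x - afun x * (ab_deriv_numer x / x^5)) / (bfun x * bfun x))
      (at x)"
    using assms by (intro DERIV_divide DERIV_afun DERIV_bfun) auto
  also have "ab_deriv_numer x / x^3 * bfun x - afun x * (ab_deriv_numer x / x^5)
      = - ab_deriv_numer x / x^5 * ((1 - cos x) / x^2)"
    using assms by (simp add: afun_eq_bfun field_simps eval_nat_numeral)
  finally show ?thesis by (simp add: power2_eq_square)
qed

lemma strict_mono_on_afun_div_bfun: "strict_mono_on {0..<2*pi} (\<lambda>x. afun x / bfun x)"
proof -
  have pos: "strict_mono_on {0<..<2*pi} (\<lambda>x. afun x / bfun x)"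
  proof (rule strict_mono_on_if_DERIV_pos[OF DERIV_afun_div_bfun])
    fix x :: real assume x: "0 < x" "x < 2*pi"
    have numer: "- ab_deriv_numer x / x^5 > 0"
      using ab_deriv_numer_neg[OF x] x by (simp add: divide_neg_pos)
    have cos: "(1 - cos x) / x^2 > 0" using cos_less_one[OF x] x by simp
    have "bfun x > 0" using bfun_bounds x by force
    then show "- ab_deriv_numer x / x^5 * ((1 - cos x) / x^2) / (bfun x)^2 > 0"
      by (intro divide_pos_pos[OF mult_pos_pos[OF numer cos]]) simp
  qed
  have "afun 0 / bfun 0 < afun y / bfun y" if "y \<in> {0<..<2*pi}" for y
    using strict_mono_on_limit_at_right_less[OF pos afun_bfun_tendsto_at_right_0(3) that]
    by (simp add: afun_def bfun_def)
  with pos show ?thesis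
    by (auto simp: monotone_on_def less_eq_real_def)
qed

theorem lemma2:
  shows "(\<forall>x\<in>{0<..<2*pi}. \<forall>y\<in>{0<..<2*pi}. x < y \<longrightarrow> afun y < afun x)
       \<and> (\<forall>x\<in>{0<..<2*pi}. \<forall>y\<in>{0<..<2*pi}. x < y \<longrightarrow> bfun y < bfun x)
       \<and> (\<forall>\<theta>\<in>{0<..<2*pi}. afun \<theta> > 0 \<and> bfun \<theta> > 0)
       \<and> afun 0 = 1/2 \<and> afun (2*pi) = 0 \<and> bfun 0 = 1/24 \<and> bfun (2*pi) = 0
       \<and> (\<forall>\<theta>\<in>{0<..<2*pi}. afun 0 > afun \<theta> \<and> afun \<theta> > afun (2*pi))
       \<and> (\<forall>\<theta>\<in>{0<..<2*pi}. bfun 0 > bfun \<theta> \<and> bfun \<theta> > bfun (2*pi))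
       \<and> (\<forall>x\<in>{0..<2*pi}. \<forall>y\<in>{0..<2*pi}. x < y \<longrightarrow> afun x / bfun x < afun y / bfun y)
       \<and> (SUP \<theta>\<in>{0<..<2*pi}. afun \<theta> / bfun \<theta>) = 4 * pi^2
       \<and> ((\<lambda>\<theta>. afun \<theta> / bfun \<theta>) \<longlongrightarrow> 4 * pi^2) (at_left (2*pi))"
proof -
  have endpoints: "afun 0 = 1/2" "afun (2*pi) = 0" "bfun 0 = 1/24" "bfun (2*pi) = 0"
    by (simp_all add: afun_def bfun_def)
  have "strict_mono_on {0<..<2*pi} (\<lambda>x. afun x / bfun x)"
    using strict_mono_on_afun_div_bfun by (rule monotone_on_subset) auto
  then have "(SUP \<theta>\<in>{0<..<2*pi}. afun \<theta> / bfun \<theta>) = 4 * pi^2"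
    by (rule SUP_strict_mono_on_eq_limit[OF _ _ afun_bfun_tendsto_at_left_2pi(3)]) simp
  then show ?thesis
    unfolding endpoints
    using strict_antimono_on_afun strict_antimono_on_bfun strict_mono_on_afun_div_bfun
      afun_bounds bfun_bounds afun_bfun_tendsto_at_left_2pi(3)
    by (simp add: monotone_on_def)
qed

end
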